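(* Let $\Omega\subset\mathbb R^n$ be bounded and let $p_1,p_2,s_1,s_2:\Omega\times\Omega\to(0,\infty)$ be symmetric functions such that $s_1(x,y)<s_2(x,y)$ and $p_1(x,y)\le p_2(x,y)$ for all $x,y\in\Omega$, $0<(p_1)^-_\Omega\le (p_1)^+_\Omega<\infty$, and $d_1\le s_2(x,y)-s_1(x,y)\le d_2$ for all $x,y\in\Omega$, for some constants $0<d_1\le d_2$. Then for every measurable $v:\Omega\to\mathbb R$, $$\varrho_{s_1(\cdot,\cdot),p_1(\cdot,\cdot)}(v;\Omega)\le M\Big\{\varrho_{s_2(\cdot,\cdot),p_2(\cdot,\cdot)}(v;\Omega)+\frac{c(n)}{d_1(p_1)^-_\Omega}\,|\Omega\cap\{v\ne0\}|\Big\},$$ where $M=\mathrm{diam}(\Omega)^{d_1(p_1)^-_\Omega}$ if $\mathrm{diam}(\Omega)\le1$, $M=\mathrm{diam}(\Omega)^{d_2(p_1)^+_\Omega}$ if $\mathrm{diam}(\Omega)>1$, and $c(n)>0$ depends only on $n$.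
   Context: For symmetric $s,p$ on $\Omega\times\Omega$ and measurable $v$: $\varrho_{s(\cdot,\cdot),p(\cdot,\cdot)}(v;\Omega):=\int_\Omega\int_\Omega\frac{|v(x)-v(y)|^{p(x,y)}}{|x-y|^{n+s(x,y)p(x,y)}}dy\,dx$. For $f$ on $\Omega\times\Omega$, $f^-_\Omega:=\inf_{\Omega\times\Omega}f$, $f^+_\Omega:=\sup_{\Omega\times\Omega}f$. *)

theory Defs
  imports "HOL-Analysis.Analysis"
begin

definition frac_modular ::
  "('a::euclidean_space \<Rightarrow> 'a \<Rightarrow> real) \<Rightarrow> ('a \<Rightarrow> 'a \<Rightarrow> real) \<Rightarrow> ('a \<Rightarrow> real) \<Rightarrow> 'a set \<Rightarrow> ennreal"
  where "frac_modular s p v \<Omega> =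
    (\<integral>\<^sup>+ x. (\<integral>\<^sup>+ y. ennreal (\<bar>v x - v y\<bar> powr p x y
        / dist x y powr (real DIM('a) + s x y * p x y)) * indicator \<Omega> y \<partial>lebesgue)
      * indicator \<Omega> x \<partial>lebesgue)"

definition inf_on :: "('a \<Rightarrow> 'a \<Rightarrow> real) \<Rightarrow> 'a set \<Rightarrow> real"
  where "inf_on f \<Omega> = (INF z\<in>\<Omega> \<times> \<Omega>. f (fst z) (snd z))"

definition sup_on :: "('a \<Rightarrow> 'a \<Rightarrow> real) \<Rightarrow> 'a set \<Rightarrow> real"
  where "sup_on f \<Omega> = (SUP z\<in>\<Omega> \<times> \<Omega>. f (fst z) (snd z))"

end

theory Submission
  imports Defs
begin

text \<open>Write \<open>|v x - v y| = t |x - y|^s\<^sub>2\<close>. If \<open>t \<ge> 1\<close>, then \<open>t^p\<^sub>1 \<le> t^p\<^sub>2\<close> and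
  \<open>|x - y|^((s\<^sub>2 - s\<^sub>1) p\<^sub>1) \<le> M\<close>, so the integrand of the \<open>(s\<^sub>1, p\<^sub>1)\<close>-modular is at most
  \<open>M\<close> times that of the \<open>(s\<^sub>2, p\<^sub>2)\<close>-modular. If \<open>t < 1\<close>, it is at most the kernel
  \<open>|x - y|^((s\<^sub>2 - s\<^sub>1) p\<^sub>1 - n)\<close>, whose exponent exceeds \<open>-n\<close> by at least \<open>d\<^sub>1 p\<^sub>1\<^sup>-\<close>.
  This case only occurs when \<open>v x \<noteq> v y\<close>, i.e. when \<open>x\<close> or \<open>y\<close> lies in \<open>{v \<noteq> 0}\<close>, and
  integrating the kernel over the ball of radius \<open>diam \<Omega>\<close> around that point costs
  \<open>O(M / (d\<^sub>1 p\<^sub>1\<^sup>-))\<close>.\<close>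

interpretation lebesgue: sigma_finite_measure "lebesgue :: 'a::euclidean_space measure"
proof
  obtain A :: "'a set set" where A: "countable A" "A \<subseteq> sets lborel" "\<Union>A = space lborel"
     "\<forall>a\<in>A. emeasure lborel a \<noteq> \<infinity>"
    using lborel.sigma_finite_countable by blast
  then show "\<exists>A::'a set set. countable A \<and> A \<subseteq> sets lebesgue \<and> \<Union>A = space lebesgue
      \<and> (\<forall>a\<in>A. emeasure lebesgue a \<noteq> \<infinity>)"
    by (intro exI[of _ A]) (auto simp: subset_eq)
qed

lemma measurable_ident_lebesgue [measurable]:
  "(\<lambda>x::'a::euclidean_space. x) \<in> borel_measurable lebesgue"
  by (rule measurable_completion) simp

text \<open>The next two lemmas need no measurability of \<open>f\<close>: the integrands of the modulars
  are only known to be measurable after restriction to \<open>\<Omega>\<close>.\<close>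

lemma nn_integral_cmult_le:
  assumes "c < top"
  shows "(\<integral>\<^sup>+ x. c * f x \<partial>M) \<le> c * integral\<^sup>N M f"
proof (cases "c = 0")
  case True
  then show ?thesis by simp
next
  case False
  show ?thesis
    unfolding nn_integral_def[of M "\<lambda>x. c * f x"]
  proof (rule SUP_least, clarsimp)
    fix s assume s: "simple_function M s" "s \<le> (\<lambda>x. c * f x)"
    define s' where "s' x = s x / c" for x
    have s'_simple: "simple_function M s'"
      unfolding s'_def divide_ennreal_def using s(1) by (intro simple_function_mult) auto
    have s_eq: "s x = c * s' x" for x
      unfolding s'_def using False assms
      by (metis ennreal_mult_divide_eq mult.commute ennreal_times_divide top.not_eq_extremum)
    have s'_le: "s' x \<le> f x" for x
      unfolding s'_def using s(2) False assms
      by (simp add: le_fun_def divide_le_posI_ennreal dual_order.strict_iff_order)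
    have "integral\<^sup>S M s = (\<integral>\<^sup>+ x. c * s' x \<partial>M)"
      using s(1) by (simp add: nn_integral_eq_simple_integral s_eq[symmetric])
    also have "\<dots> = c * integral\<^sup>N M s'"
      using s'_simple by (intro nn_integral_cmult) (auto intro: borel_measurable_simple_function)
    also have "\<dots> \<le> c * integral\<^sup>N M f"
      using s'_le by (intro mult_left_mono nn_integral_mono) auto
    finally show "integral\<^sup>S M s \<le> c * integral\<^sup>N M f" .
  qed
qed

lemma nn_integral_add_le:
  assumes g: "g \<in> borel_measurable M"
  shows "(\<integral>\<^sup>+ x. f x + g x \<partial>M) \<le> integral\<^sup>N M f + integral\<^sup>N M g"
  unfolding nn_integral_def_finite[of M "\<lambda>x. f x + g x"]
proof (rule SUP_least, clarsimp)
  fix s assume s: "simple_function M s" "s \<le> (\<lambda>x. f x + g x)" and fin: "\<forall>x. s x < top"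
  have s_meas: "s \<in> borel_measurable M"
    using s(1) by (rule borel_measurable_simple_function)
  have "integral\<^sup>S M s = integral\<^sup>N M s"
    using s(1) by (simp add: nn_integral_eq_simple_integral)
  also have "\<dots> \<le> (\<integral>\<^sup>+ x. (s x - g x) + g x \<partial>M)"
    by (intro nn_integral_mono) (auto simp add: diff_add_self_ennreal)
  also have "\<dots> = (\<integral>\<^sup>+ x. (s x - g x) \<partial>M) + integral\<^sup>N M g"
    using s_meas g by (intro nn_integral_add) auto
  also have "(\<integral>\<^sup>+ x. (s x - g x) \<partial>M) \<le> integral\<^sup>N M f"
    using s(2) fin
    by (intro nn_integral_mono) (auto simp: le_fun_def ennreal_minus_le_iff add.commute; metis less_irrefl)
  finally show "integral\<^sup>S M s \<le> integral\<^sup>N M f + integral\<^sup>N M g"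
    by (simp add: add_right_mono order_trans)
qed

lemma (in sigma_finite_measure) nn_integral_double_le_pointwise:
  assumes "\<Omega> \<subseteq> space M" and H: "case_prod H \<in> borel_measurable (M \<Otimes>\<^sub>M M)" and "c < top"
    and pointwise: "\<And>x y. x \<in> \<Omega> \<Longrightarrow> F x y * indicator \<Omega> y \<le> c * (G x y * indicator \<Omega> y) + H x y"
  shows "(\<integral>\<^sup>+x. (\<integral>\<^sup>+y. F x y * indicator \<Omega> y \<partial>M) * indicator \<Omega> x \<partial>M)
    \<le> c * (\<integral>\<^sup>+x. (\<integral>\<^sup>+y. G x y * indicator \<Omega> y \<partial>M) * indicator \<Omega> x \<partial>M)
      + (\<integral>\<^sup>+x. (\<integral>\<^sup>+y. H x y \<partial>M) \<partial>M)"
proof -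
  have H_section: "H x \<in> borel_measurable M" if "x \<in> \<Omega>" for x
    using measurable_Pair2[OF H] that \<open>\<Omega> \<subseteq> space M\<close> by auto
  have inner: "(\<integral>\<^sup>+y. F x y * indicator \<Omega> y \<partial>M)
      \<le> c * (\<integral>\<^sup>+y. G x y * indicator \<Omega> y \<partial>M) + (\<integral>\<^sup>+y. H x y \<partial>M)"
    if "x \<in> \<Omega>" for x
  proof -
    have "(\<integral>\<^sup>+y. F x y * indicator \<Omega> y \<partial>M)
        \<le> (\<integral>\<^sup>+y. c * (G x y * indicator \<Omega> y) + H x y \<partial>M)"
      using pointwise[OF that] by (intro nn_integral_mono) auto
    also have "\<dots> \<le> (\<integral>\<^sup>+y. c * (G x y * indicator \<Omega> y) \<partial>M) + (\<integral>\<^sup>+y. H x y \<partial>M)"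
      by (rule nn_integral_add_le[OF H_section[OF that]])
    also have "\<dots> \<le> c * (\<integral>\<^sup>+y. G x y * indicator \<Omega> y \<partial>M) + (\<integral>\<^sup>+y. H x y \<partial>M)"
      by (intro add_right_mono nn_integral_cmult_le[OF \<open>c < top\<close>])
    finally show ?thesis .
  qed
  have "(\<integral>\<^sup>+x. (\<integral>\<^sup>+y. F x y * indicator \<Omega> y \<partial>M) * indicator \<Omega> x \<partial>M)
      \<le> (\<integral>\<^sup>+x. c * ((\<integral>\<^sup>+y. G x y * indicator \<Omega> y \<partial>M) * indicator \<Omega> x)
          + (\<integral>\<^sup>+y. H x y \<partial>M) \<partial>M)"
    using inner by (intro nn_integral_mono) (auto simp: indicator_def)
  also have "\<dots> \<le> (\<integral>\<^sup>+x. c * ((\<integral>\<^sup>+y. G x y * indicator \<Omega> y \<partial>M) * indicator \<Omega> x) \<partial>M)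
      + (\<integral>\<^sup>+x. (\<integral>\<^sup>+y. H x y \<partial>M) \<partial>M)"
    by (rule nn_integral_add_le[OF borel_measurable_nn_integral[OF H]])
  also have "\<dots> \<le> c * (\<integral>\<^sup>+x. (\<integral>\<^sup>+y. G x y * indicator \<Omega> y \<partial>M) * indicator \<Omega> x \<partial>M)
      + (\<integral>\<^sup>+x. (\<integral>\<^sup>+y. H x y \<partial>M) \<partial>M)"
    by (intro add_right_mono nn_integral_cmult_le[OF \<open>c < top\<close>])
  finally show ?thesis .
qed

lemma (in sigma_finite_measure) nn_integral_symmetrized_le:
  assumes g: "case_prod g \<in> borel_measurable (M \<Otimes>\<^sub>M M)"
    and V: "V \<in> sets M"
    and bound: "\<And>x. x \<in> V \<Longrightarrow> (\<integral>\<^sup>+y. g x y \<partial>M) \<le> B"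
  shows "(\<integral>\<^sup>+x. (\<integral>\<^sup>+y. g x y * indicator V x + g y x * indicator V y \<partial>M) \<partial>M)
    \<le> 2 * B * emeasure M V"
proof -
  interpret MM: pair_sigma_finite M M
    by (intro pair_sigma_finite.intro sigma_finite_measure_axioms)
  define h where "h x y = g x y * indicator V x" for x y
  have h: "case_prod h \<in> borel_measurable (M \<Otimes>\<^sub>M M)"
    unfolding h_def using g V by measurable
  have h_swap: "(\<lambda>(x, y). h y x) \<in> borel_measurable (M \<Otimes>\<^sub>M M)"
    using measurable_pair_swap[OF h] by (simp add: split_beta')
  have half: "(\<integral>\<^sup>+x. (\<integral>\<^sup>+y. h x y \<partial>M) \<partial>M) \<le> B * emeasure M V"
  proof -
    have "(\<integral>\<^sup>+x. (\<integral>\<^sup>+y. h x y \<partial>M) \<partial>M) \<le> (\<integral>\<^sup>+x. B * indicator V x \<partial>M)"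
      using bound by (intro nn_integral_mono) (auto simp: h_def indicator_def)
    then show ?thesis using V by (simp add: nn_integral_cmult_indicator)
  qed
  have "(\<integral>\<^sup>+x. (\<integral>\<^sup>+y. h x y + h y x \<partial>M) \<partial>M)
      = (\<integral>\<^sup>+x. (\<integral>\<^sup>+y. h x y \<partial>M) + (\<integral>\<^sup>+y. h y x \<partial>M) \<partial>M)"
    using measurable_Pair2[OF h] measurable_Pair2[OF h_swap]
    by (intro nn_integral_cong nn_integral_add) auto
  also have "\<dots> = (\<integral>\<^sup>+x. (\<integral>\<^sup>+y. h x y \<partial>M) \<partial>M) + (\<integral>\<^sup>+x. (\<integral>\<^sup>+y. h y x \<partial>M) \<partial>M)"
    using borel_measurable_nn_integral[OF h]
      borel_measurable_nn_integral[OF h_swap]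
    by (intro nn_integral_add) auto
  also have "(\<integral>\<^sup>+x. (\<integral>\<^sup>+y. h y x \<partial>M) \<partial>M) = (\<integral>\<^sup>+x. (\<integral>\<^sup>+y. h x y \<partial>M) \<partial>M)"
    by (rule MM.Fubini'[OF h])
  also have "(\<integral>\<^sup>+x. (\<integral>\<^sup>+y. h x y \<partial>M) \<partial>M) + (\<integral>\<^sup>+x. (\<integral>\<^sup>+y. h x y \<partial>M) \<partial>M)
      \<le> 2 * B * emeasure M V"
    using add_mono[OF half half] by (simp add: mult_2 distrib_right)
  finally show ?thesis by (simp add: h_def)
qed

lemma annulus_index_exists:
  fixes r R d :: real
  assumes r: "0 < r" "r < 1" and d: "0 < d" "d \<le> R"
  obtains k where "R * r ^ Suc k < d" "d \<le> R * r ^ k"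
proof -
  have R: "0 < R" using d by simp
  obtain m where m: "r ^ m < d / R"
    using real_arch_pow_inv[of "d / R" r] d R r by auto
  have ex: "\<exists>j. R * r ^ Suc j < d"
  proof
    have "R * r ^ Suc m < R * r ^ m" using R r by simp
    also have "\<dots> < d" using m R by (simp add: field_simps)
    finally show "R * r ^ Suc m < d" .
  qed
  define k where "k = (LEAST j. R * r ^ Suc j < d)"
  have "R * r ^ Suc k < d"
    unfolding k_def by (rule LeastI_ex[OF ex])
  moreover have "d \<le> R * r ^ k"
  proof (cases k)
    case (Suc j)
    then show ?thesis using not_less_Least[of j "\<lambda>j. R * r ^ Suc j < d"] k_def by simp
  qed (use d in simp)
  ultimately show ?thesis by (rule that)
qed

lemma powr_le_on_annulus:
  fixes d q L \<gamma> :: real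
  assumes L: "0 < L" "- \<gamma> \<le> L" and d: "0 < d" "q * exp (- 1 / L) < d" "d \<le> q"
  shows "d powr \<gamma> \<le> 3 * q powr \<gamma>"
proof (cases "\<gamma> \<ge> 0")
  case True
  have "d powr \<gamma> \<le> q powr \<gamma>"
    using True d by (intro powr_mono2) auto
  then show ?thesis using powr_ge_zero[of q \<gamma>] by linarith
next
  case False
  have q: "0 < q" using d by simp
  have "d powr \<gamma> \<le> (q * exp (- 1 / L)) powr \<gamma>"
    using False d q by (intro powr_mono2') auto
  also have "\<dots> = q powr \<gamma> * exp (- \<gamma> / L)"
    using q by (simp add: powr_mult exp_powr_real)
  also have "exp (- \<gamma> / L) \<le> exp 1"
    using L by (simp add: field_simps)
  also have "exp (1::real) \<le> 3"
    by (rule exp_le)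
  finally show ?thesis using q by (simp add: mult.commute mult_left_mono)
qed

lemma dist_powr_le_suminf_annuli:
  fixes x y :: "'a::metric_space"
  assumes L: "0 < L" "- \<gamma> \<le> L" and R: "0 \<le> R"
  shows "ennreal (dist x y powr \<gamma>) * indicator (cball x R) y
    \<le> (\<Sum>k. ennreal (3 * (R * exp (- 1 / L) ^ k) powr \<gamma>)
          * indicator (cball x (R * exp (- 1 / L) ^ k) - cball x (R * exp (- 1 / L) ^ Suc k)) y)"
    (is "_ \<le> (\<Sum>k. ?a k)")
proof (cases "y \<in> cball x R \<and> y \<noteq> x")
  case True
  define r where "r = exp (- 1 / L)"
  have r: "0 < r" "r < 1" using L by (auto simp: r_def)
  obtain k where k: "R * r ^ Suc k < dist x y" "dist x y \<le> R * r ^ k"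
    using annulus_index_exists[OF r, of "dist x y" R] True by auto
  have "dist x y powr \<gamma> \<le> 3 * (R * r ^ k) powr \<gamma>"
    using k L True by (intro powr_le_on_annulus) (auto simp: r_def mult_ac)
  then have "ennreal (dist x y powr \<gamma>) * indicator (cball x R) y \<le> ?a k"
    using True k by (auto simp: r_def dist_commute intro: ennreal_leI)
  also have "?a k \<le> (\<Sum>k. ?a k)"
    using sum_le_suminf[of ?a "{k}"] by (simp del: sum_mult_indicator)
  finally show ?thesis .
qed (auto simp: indicator_def)

lemma emeasure_lebesgue_annulus:
  fixes x :: "'a::euclidean_space"
  assumes "0 \<le> q" "0 \<le> r" "r \<le> 1"
  shows "emeasure lebesgue (cball x q - cball x (q * r))
    = ennreal (unit_ball_vol (real DIM('a)) * q ^ DIM('a) * (1 - r ^ DIM('a)))"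
proof -
  have "cball x (q * r) \<subseteq> cball x q"
    using assms by (intro subset_cball) (simp add: mult_left_le)
  then have "emeasure lebesgue (cball x q - cball x (q * r))
      = emeasure lebesgue (cball x q) - emeasure lebesgue (cball x (q * r))"
    using assms by (intro emeasure_Diff) (auto simp: emeasure_cball)
  also have "\<dots> = ennreal (unit_ball_vol (real DIM('a)) * q ^ DIM('a)
      - unit_ball_vol (real DIM('a)) * (q * r) ^ DIM('a))"
    using assms by (simp add: emeasure_cball ennreal_minus)
  finally show ?thesis
    by (simp add: power_mult_distrib field_simps)
qed

lemma ennreal_powr_mult_emeasure_annulus:
  fixes x :: "'a::euclidean_space"
  assumes "0 \<le> c" "0 < q" "0 \<le> r" "r \<le> 1"
  shows "ennreal (c * q powr (\<alpha> - real DIM('a))) * emeasure lebesgue (cball x q - cball x (q * r))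
    = ennreal (c * unit_ball_vol (real DIM('a)) * (1 - r ^ DIM('a)) * q powr \<alpha>)"
proof -
  have power: "q powr (\<alpha> - real DIM('a)) * q ^ DIM('a) = q powr \<alpha>"
    using assms by (simp add: powr_realpow[symmetric] powr_add[symmetric])
  have "0 \<le> unit_ball_vol (real DIM('a)) * q ^ DIM('a) * (1 - r ^ DIM('a))"
    using assms by (simp add: power_le_one)
  then have "ennreal (c * q powr (\<alpha> - real DIM('a))) * emeasure lebesgue (cball x q - cball x (q * r))
      = ennreal (c * q powr (\<alpha> - real DIM('a)) * (unit_ball_vol (real DIM('a)) * q ^ DIM('a) * (1 - r ^ DIM('a))))"
    using assms by (simp only: emeasure_lebesgue_annulus less_imp_le ennreal_mult mult_nonneg_nonneg powr_ge_zero)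
  also have "c * q powr (\<alpha> - real DIM('a)) * (unit_ball_vol (real DIM('a)) * q ^ DIM('a) * (1 - r ^ DIM('a)))
      = c * unit_ball_vol (real DIM('a)) * (1 - r ^ DIM('a)) * (q powr (\<alpha> - real DIM('a)) * q ^ DIM('a))"
    by (simp only: ac_simps)
  finally show ?thesis unfolding power .
qed

lemma one_minus_exp_ratio_le:
  fixes s t :: real
  assumes "0 \<le> s" "0 < t" "t \<le> 1"
  shows "(1 - exp (- s)) / (1 - exp (- t)) \<le> 2 * s / t"
proof -
  have numerator: "1 - exp (- s) \<le> s"
    using exp_ge_add_one_self[of "- s"] by simp
  have "exp (- t) * (1 + t) \<le> 1"
    using exp_ge_add_one_self[of t] assms by (simp add: exp_minus field_simps)
  moreover have "2 \<le> (2 - t) * (1 + t)"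
    using assms by (simp add: algebra_simps mult_left_le_one_le)
  ultimately have "2 * exp (- t) * (1 + t) \<le> (2 - t) * (1 + t)"
    by linarith
  then have denominator: "t / 2 \<le> 1 - exp (- t)"
    using assms by (simp add: mult_le_cancel_right)
  have "(1 - exp (- s)) / (1 - exp (- t)) \<le> s / (t / 2)"
    using numerator denominator assms by (intro frac_le) auto
  then show ?thesis by (simp add: mult.commute)
qed

definition riesz_ball_const :: "nat \<Rightarrow> real"
  where "riesz_ball_const n = 6 * real n * unit_ball_vol (real n)"

lemma riesz_ball_const_nonneg: "0 \<le> riesz_ball_const n"
  by (simp add: riesz_ball_const_def)

text \<open>The ball is cut into the annuli \<open>R r^(k+1) < |x - y| \<le> R r^k\<close> with
  \<open>r = exp (-1/L)\<close> and \<open>L = max \<alpha> n\<close>; on each of them the integrand varies at most by the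
  factor \<open>e < 3\<close>, and the resulting geometric series sums to \<open>O(n \<omega>\<^sub>n R^\<alpha> / \<alpha>)\<close>.\<close>

lemma nn_integral_dist_powr_cball_le:
  fixes x :: "'a::euclidean_space" and \<alpha> R :: real
  assumes \<alpha>: "0 < \<alpha>" and R: "0 \<le> R"
  shows "(\<integral>\<^sup>+y. ennreal (dist x y powr (\<alpha> - real DIM('a))) * indicator (cball x R) y \<partial>lebesgue)
      \<le> ennreal (riesz_ball_const DIM('a) * R powr \<alpha> / \<alpha>)"
proof -
  define N where "N = DIM('a)"
  define n where "n = real N"
  define \<omega> where "\<omega> = unit_ball_vol n"
  define L where "L = max \<alpha> n"
  define r where "r = exp (- 1 / L)"
  define q where "q k = R * r ^ k" for k
  define A where "A k = cball x (q k) - cball x (q (Suc k))" for k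
  have n: "1 \<le> n" unfolding n_def N_def by simp
  have \<omega>: "0 \<le> \<omega>" unfolding \<omega>_def using n by simp
  have L: "0 < L" "\<alpha> \<le> L" "n \<le> L" using \<alpha> n by (auto simp: L_def)
  have r: "0 < r" "r < 1" using L by (auto simp: r_def)
  have A_meas: "A k \<in> sets lebesgue" for k unfolding A_def by auto
  have A_cover: "ennreal (dist x y powr (\<alpha> - n)) * indicator (cball x R) y
      \<le> (\<Sum>k. ennreal (3 * q k powr (\<alpha> - n)) * indicator (A k) y)" for y
    unfolding q_def A_def r_def using L \<alpha> R by (intro dist_powr_le_suminf_annuli) auto
  have annulus_term: "ennreal (3 * q k powr (\<alpha> - n)) * emeasure lebesgue (A k)
      = ennreal (3 * \<omega> * (1 - r ^ N) * R powr \<alpha> * (r powr \<alpha>) ^ k)" for k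
  proof (cases "R = 0")
    case False
    then have "0 < q k" using R r by (simp add: q_def)
    moreover have "q k powr \<alpha> = R powr \<alpha> * (r powr \<alpha>) ^ k"
      using R r by (simp add: q_def powr_mult powr_realpow[symmetric] powr_powr mult.commute)
    ultimately show ?thesis
      using ennreal_powr_mult_emeasure_annulus[of 3 "q k" r \<alpha> x] r
      by (simp add: A_def q_def \<omega>_def n_def N_def mult_ac)
  qed (simp add: A_def q_def)
  have "(\<integral>\<^sup>+y. ennreal (dist x y powr (\<alpha> - real DIM('a))) * indicator (cball x R) y \<partial>lebesgue)
      \<le> (\<integral>\<^sup>+y. (\<Sum>k. ennreal (3 * q k powr (\<alpha> - n)) * indicator (A k) y) \<partial>lebesgue)"
    using A_cover unfolding n_def N_def by (intro nn_integral_mono) auto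
  also have "\<dots> = (\<Sum>k. ennreal (3 * q k powr (\<alpha> - n)) * emeasure lebesgue (A k))"
    using A_meas by (simp add: nn_integral_suminf nn_integral_cmult_indicator)
  also have "\<dots> = ennreal (3 * \<omega> * (1 - r ^ N) * R powr \<alpha> * (1 / (1 - r powr \<alpha>)))"
    unfolding annulus_term
  proof (rule suminf_ennreal_eq)
    show "0 \<le> 3 * \<omega> * (1 - r ^ N) * R powr \<alpha> * (r powr \<alpha>) ^ k" for k
      using \<omega> r by (simp add: power_le_one)
    have "r powr \<alpha> < 1" using r \<alpha> by (simp add: powr01_less_one)
    then show "(\<lambda>k. 3 * \<omega> * (1 - r ^ N) * R powr \<alpha> * (r powr \<alpha>) ^ k) sums
        (3 * \<omega> * (1 - r ^ N) * R powr \<alpha> * (1 / (1 - r powr \<alpha>)))"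
      using r by (intro sums_mult geometric_sums) simp
  qed
  also have "\<dots> \<le> ennreal (riesz_ball_const DIM('a) * R powr \<alpha> / \<alpha>)"
  proof (rule ennreal_leI)
    have "r ^ N = exp (- (n / L))" "r powr \<alpha> = exp (- (\<alpha> / L))"
      unfolding r_def n_def by (simp_all add: exp_of_nat_mult[symmetric] powr_def)
    then have "(1 - r ^ N) / (1 - r powr \<alpha>) \<le> 2 * (n / L) / (\<alpha> / L)"
      using L \<alpha> n by (simp only:) (rule one_minus_exp_ratio_le; simp)
    then have "3 * \<omega> * R powr \<alpha> * ((1 - r ^ N) / (1 - r powr \<alpha>)) \<le> 3 * \<omega> * R powr \<alpha> * (2 * (n / L) / (\<alpha> / L))"
      using \<omega> by (intro mult_left_mono) auto
    then show "3 * \<omega> * (1 - r ^ N) * R powr \<alpha> * (1 / (1 - r powr \<alpha>))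
        \<le> riesz_ball_const DIM('a) * R powr \<alpha> / \<alpha>"
      using L \<alpha> by (simp add: riesz_ball_const_def \<omega>_def n_def N_def field_simps)
  qed
  finally show ?thesis .
qed

definition piecewise_powr :: "real \<Rightarrow> real \<Rightarrow> real \<Rightarrow> real"
  where "piecewise_powr a b r = (if r \<le> 1 then r powr a else r powr b)"

lemma piecewise_powr_nonneg: "0 \<le> piecewise_powr a b r"
  by (simp add: piecewise_powr_def)

lemma powr_le_piecewise_powr:
  assumes "0 < d" "a \<le> e" "e \<le> b"
  shows "d powr e \<le> piecewise_powr a b d"
  using assms by (auto simp: piecewise_powr_def intro: powr_mono' powr_mono)

lemma piecewise_powr_mono:
  assumes "0 \<le> a" "a \<le> b" "0 \<le> d" "d \<le> D"
  shows "piecewise_powr a b d \<le> piecewise_powr a b D"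
proof (cases "d \<le> 1")
  case True
  then have "d powr a \<le> 1" using assms by (intro powr_le1) auto
  moreover have "1 \<le> D powr b" if "1 < D" using that assms by (intro ge_one_powr_ge_zero) auto
  moreover have "d powr a \<le> D powr a" using assms by (intro powr_mono2) auto
  ultimately show ?thesis using True by (auto simp: piecewise_powr_def)
next
  case False
  then show ?thesis using assms by (auto simp: piecewise_powr_def intro: powr_mono2)
qed

lemma frac_integrand_le:
  fixes a d D n p1 p2 s1 s2 \<alpha> \<beta> :: real
  assumes d: "0 < d" "d \<le> D" and p: "0 < p1" "p1 \<le> p2"
    and e: "0 < \<alpha>" "\<alpha> \<le> (s2 - s1) * p1" "(s2 - s1) * p1 \<le> \<beta>"
  shows "\<bar>a\<bar> powr p1 / d powr (n + s1 * p1)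
     \<le> piecewise_powr \<alpha> \<beta> D * (\<bar>a\<bar> powr p2 / d powr (n + s2 * p2))
       + (if a = 0 then 0 else piecewise_powr (\<alpha> - n) (\<beta> - n) d)"
proof (cases "a = 0")
  case True
  then show ?thesis using p by (simp add: piecewise_powr_nonneg)
next
  case False
  define e where "e = (s2 - s1) * p1"
  define t where "t = \<bar>a\<bar> / d powr s2"
  have t: "0 < t" using False d by (simp add: t_def)
  have a_eq: "\<bar>a\<bar> = t * d powr s2" using d by (simp add: t_def)
  have lhs: "\<bar>a\<bar> powr p1 / d powr (n + s1 * p1) = t powr p1 * d powr e / d powr n"
    unfolding a_eq e_def using t d
    by (simp add: powr_mult powr_powr powr_add powr_diff algebra_simps field_simps)
  have rhs: "\<bar>a\<bar> powr p2 / d powr (n + s2 * p2) = t powr p2 / d powr n"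
    unfolding a_eq using t d by (simp add: powr_mult powr_powr powr_add)
  have nonneg: "0 \<le> piecewise_powr \<alpha> \<beta> D * (t powr p2 / d powr n)"
    by (simp add: piecewise_powr_nonneg)
  show ?thesis
  proof (cases "1 \<le> t")
    case True
    have "d powr e \<le> piecewise_powr \<alpha> \<beta> d"
      using d e by (intro powr_le_piecewise_powr) (auto simp: e_def)
    also have "\<dots> \<le> piecewise_powr \<alpha> \<beta> D"
      using d e by (intro piecewise_powr_mono) auto
    finally have "t powr p1 * d powr e \<le> t powr p2 * piecewise_powr \<alpha> \<beta> D"
      using True p by (intro mult_mono powr_mono) auto
    then have "t powr p1 * d powr e / d powr n \<le> piecewise_powr \<alpha> \<beta> D * (t powr p2 / d powr n)"
      by (simp add: divide_right_mono mult.commute)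
    then show ?thesis
      unfolding lhs rhs using False piecewise_powr_nonneg[of "\<alpha> - n" "\<beta> - n" d] by simp
  next
    case False
    have "t powr p1 * d powr e / d powr n \<le> d powr e / d powr n"
      using t False p by (intro divide_right_mono mult_left_le_one_le powr_le1) auto
    also have "\<dots> = d powr (e - n)"
      using d by (simp add: powr_diff)
    also have "\<dots> \<le> piecewise_powr (\<alpha> - n) (\<beta> - n) d"
      using d e by (intro powr_le_piecewise_powr) (auto simp: e_def)
    finally show ?thesis
      unfolding lhs rhs using \<open>a \<noteq> 0\<close> nonneg by simp
  qed
qed

lemma ennreal_frac_integrand_le:
  fixes a d D n p1 p2 s1 s2 \<alpha> \<beta> :: real
  assumes "0 < d" "d \<le> D" "0 < p1" "p1 \<le> p2"
    and "0 < \<alpha>" "\<alpha> \<le> (s2 - s1) * p1" "(s2 - s1) * p1 \<le> \<beta>"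
    and remainder: "a \<noteq> 0 \<Longrightarrow> ennreal (piecewise_powr (\<alpha> - n) (\<beta> - n) d) \<le> K"
  shows "ennreal (\<bar>a\<bar> powr p1 / d powr (n + s1 * p1))
     \<le> ennreal (piecewise_powr \<alpha> \<beta> D) * ennreal (\<bar>a\<bar> powr p2 / d powr (n + s2 * p2)) + K"
proof -
  let ?M = "piecewise_powr \<alpha> \<beta> D" and ?G = "\<bar>a\<bar> powr p2 / d powr (n + s2 * p2)"
    and ?K = "if a = 0 then 0 else piecewise_powr (\<alpha> - n) (\<beta> - n) d"
  have nonneg: "0 \<le> ?M" "0 \<le> ?G" "0 \<le> ?K"
    by (simp_all add: piecewise_powr_nonneg)
  have "ennreal (\<bar>a\<bar> powr p1 / d powr (n + s1 * p1)) \<le> ennreal (?M * ?G + ?K)"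
    using assms by (intro ennreal_leI frac_integrand_le) auto
  also have "\<dots> = ennreal ?M * ennreal ?G + ennreal ?K"
    using nonneg by (simp only: ennreal_plus mult_nonneg_nonneg ennreal_mult)
  also have "ennreal ?K \<le> K"
    using remainder by auto
  finally show ?thesis by (simp add: add_left_mono)
qed

lemma nn_integral_piecewise_kernel_cball_le:
  fixes x :: "'a::euclidean_space"
  assumes \<alpha>: "0 < \<alpha>" "\<alpha> \<le> \<beta>" and D: "0 \<le> D"
  shows "(\<integral>\<^sup>+y. ennreal (piecewise_powr (\<alpha> - real DIM('a)) (\<beta> - real DIM('a)) (dist x y))
      * indicator (cball x D) y \<partial>lebesgue)
    \<le> ennreal (2 * riesz_ball_const DIM('a) * piecewise_powr \<alpha> \<beta> D / \<alpha>)"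
    (is "?I \<le> _")
proof -
  define C where "C = riesz_ball_const DIM('a)"
  have C: "0 \<le> C" unfolding C_def by (rule riesz_ball_const_nonneg)
  have [measurable]: "cball x r \<in> sets lebesgue" for r by simp
  show ?thesis
  proof (cases "D \<le> 1")
    case True
    have "?I = (\<integral>\<^sup>+y. ennreal (dist x y powr (\<alpha> - real DIM('a))) * indicator (cball x D) y \<partial>lebesgue)"
      using True by (intro nn_integral_cong) (auto simp: indicator_def piecewise_powr_def)
    also have "\<dots> \<le> ennreal (C * D powr \<alpha> / \<alpha>)"
      unfolding C_def using \<alpha>(1) D by (rule nn_integral_dist_powr_cball_le)
    also have "\<dots> \<le> ennreal (2 * C * piecewise_powr \<alpha> \<beta> D / \<alpha>)"
      using True C \<alpha> by (intro ennreal_leI) (simp add: piecewise_powr_def divide_right_mono)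
    finally show ?thesis unfolding C_def .
  next
    case False
    have M: "1 \<le> D powr \<beta>" using False \<alpha> by (intro ge_one_powr_ge_zero) auto
    have "?I \<le> (\<integral>\<^sup>+y. ennreal (dist x y powr (\<alpha> - real DIM('a))) * indicator (cball x 1) y
        + ennreal (dist x y powr (\<beta> - real DIM('a))) * indicator (cball x D) y \<partial>lebesgue)"
      by (intro nn_integral_mono) (auto simp: indicator_def piecewise_powr_def)
    also have "\<dots> = (\<integral>\<^sup>+y. ennreal (dist x y powr (\<alpha> - real DIM('a))) * indicator (cball x 1) y \<partial>lebesgue)
        + (\<integral>\<^sup>+y. ennreal (dist x y powr (\<beta> - real DIM('a))) * indicator (cball x D) y \<partial>lebesgue)"
      by (intro nn_integral_add) measurable
    also have "\<dots> \<le> ennreal (C * 1 powr \<alpha> / \<alpha>) + ennreal (C * D powr \<beta> / \<beta>)"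
      unfolding C_def using \<alpha> D by (intro add_mono nn_integral_dist_powr_cball_le) auto
    also have "\<dots> = ennreal (C / \<alpha> + C * D powr \<beta> / \<beta>)"
      using C \<alpha> by (simp add: ennreal_plus[symmetric] del: ennreal_plus)
    also have "\<dots> \<le> ennreal (2 * C * piecewise_powr \<alpha> \<beta> D / \<alpha>)"
    proof (intro ennreal_leI)
      have "C / \<alpha> \<le> C * D powr \<beta> / \<alpha>"
        using M C \<alpha> by (simp add: divide_right_mono mult_le_cancel_left1)
      moreover have "C * D powr \<beta> / \<beta> \<le> C * D powr \<beta> / \<alpha>"
        using M C \<alpha> by (intro divide_left_mono) auto
      ultimately show "C / \<alpha> + C * D powr \<beta> / \<beta> \<le> 2 * C * piecewise_powr \<alpha> \<beta> D / \<alpha>"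
        using False by (simp add: piecewise_powr_def)
    qed
    finally show ?thesis unfolding C_def .
  qed
qed

lemma borel_measurable_piecewise_powr [measurable]: "piecewise_powr a b \<in> borel_measurable borel"
  unfolding piecewise_powr_def by measurable

lemma inf_on_le:
  assumes "\<forall>x\<in>\<Omega>. \<forall>y\<in>\<Omega>. 0 < f x y" "x \<in> \<Omega>" "y \<in> \<Omega>"
  shows "inf_on f \<Omega> \<le> f x y"
proof -
  have "bdd_below ((\<lambda>z. f (fst z) (snd z)) ` (\<Omega> \<times> \<Omega>))"
    using assms(1) by (intro bdd_belowI[of _ 0]) (auto simp: less_imp_le)
  then show ?thesis
    unfolding inf_on_def using assms(2,3) by (auto intro: cINF_lower2)
qed

lemma sup_on_ge:
  assumes "bdd_above ((\<lambda>z. f (fst z) (snd z)) ` (\<Omega> \<times> \<Omega>))" "x \<in> \<Omega>" "y \<in> \<Omega>"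
  shows "f x y \<le> sup_on f \<Omega>"
  unfolding sup_on_def using assms by (auto intro: cSUP_upper2)

lemma exponent_gap_bounds:
  assumes p_pos: "\<forall>x\<in>\<Omega>. \<forall>y\<in>\<Omega>. 0 < p x y" and p_bdd: "bdd_above ((\<lambda>z. p (fst z) (snd z)) ` (\<Omega> \<times> \<Omega>))"
    and "0 < inf_on p \<Omega>" "0 \<le> d1" and s: "\<forall>x\<in>\<Omega>. \<forall>y\<in>\<Omega>. d1 \<le> s2 x y - s1 x y \<and> s2 x y - s1 x y \<le> d2"
    and xy: "x \<in> \<Omega>" "y \<in> \<Omega>"
  shows "d1 * inf_on p \<Omega> \<le> (s2 x y - s1 x y) * p x y" "(s2 x y - s1 x y) * p x y \<le> d2 * sup_on p \<Omega>"
proof -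
  have gap: "d1 \<le> s2 x y - s1 x y" "s2 x y - s1 x y \<le> d2"
    using s xy by auto
  show "d1 * inf_on p \<Omega> \<le> (s2 x y - s1 x y) * p x y"
    using gap inf_on_le[OF p_pos xy] assms(3,4) by (intro mult_mono) linarith+
  show "(s2 x y - s1 x y) * p x y \<le> d2 * sup_on p \<Omega>"
    using gap sup_on_ge[OF p_bdd xy] p_pos xy assms(4) by (intro mult_mono) (auto simp: less_imp_le)
qed

lemma sets_nonzero_restrict_space:
  assumes "\<Omega> \<in> sets M" "v \<in> borel_measurable (restrict_space M \<Omega>)"
  shows "\<Omega> \<inter> {x. v x \<noteq> (0::real)} \<in> sets M"
proof -
  have "{x \<in> space (restrict_space M \<Omega>). v x \<noteq> 0} \<in> sets (restrict_space M \<Omega>)"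
    using assms(2) by measurable
  moreover have "{x \<in> space (restrict_space M \<Omega>). v x \<noteq> 0} = \<Omega> \<inter> {x. v x \<noteq> 0}"
    using sets.sets_into_space[OF assms(1)] by (auto simp: space_restrict_space)
  ultimately show ?thesis
    using assms(1) by (simp add: sets_restrict_space_iff)
qed

lemma nn_integral_symmetrized_kernel_le:
  fixes \<Omega> V :: "'a::euclidean_space set"
  assumes \<Omega>: "\<Omega> \<in> sets lebesgue" "bounded \<Omega>" and V: "V \<in> sets lebesgue" "V \<subseteq> \<Omega>"
    and \<alpha>: "0 < \<alpha>" "\<alpha> \<le> \<beta>"
  defines "k x y \<equiv> ennreal (piecewise_powr (\<alpha> - real DIM('a)) (\<beta> - real DIM('a)) (dist x y)) * indicator \<Omega> y"
  shows "(\<integral>\<^sup>+x. (\<integral>\<^sup>+y. k x y * indicator V x + k y x * indicator V y \<partial>lebesgue) \<partial>lebesgue)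
    \<le> ennreal (piecewise_powr \<alpha> \<beta> (diameter \<Omega>))
      * (ennreal (4 * riesz_ball_const DIM('a) / \<alpha>) * emeasure lebesgue V)"
proof -
  define C where "C = riesz_ball_const DIM('a)"
  define M where "M = piecewise_powr \<alpha> \<beta> (diameter \<Omega>)"
  have [measurable]: "\<Omega> \<in> sets lebesgue" using \<Omega> by simp
  have k_meas: "case_prod k \<in> borel_measurable (lebesgue \<Otimes>\<^sub>M lebesgue)"
    unfolding k_def split_beta' by measurable
  have "(\<integral>\<^sup>+y. k x y \<partial>lebesgue) \<le> ennreal (2 * C * M / \<alpha>)" if "x \<in> V" for x
  proof -
    have "(\<integral>\<^sup>+y. k x y \<partial>lebesgue)
        \<le> (\<integral>\<^sup>+y. ennreal (piecewise_powr (\<alpha> - real DIM('a)) (\<beta> - real DIM('a)) (dist x y))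
              * indicator (cball x (diameter \<Omega>)) y \<partial>lebesgue)"
      using that V \<Omega> diameter_bounded_bound[of \<Omega> x]
      unfolding k_def by (intro nn_integral_mono) (auto simp: indicator_def)
    also have "\<dots> \<le> ennreal (2 * C * M / \<alpha>)"
      unfolding C_def M_def using \<alpha> \<Omega>(2)
      by (intro nn_integral_piecewise_kernel_cball_le) (auto simp: diameter_ge_0)
    finally show ?thesis .
  qed
  then have "(\<integral>\<^sup>+x. (\<integral>\<^sup>+y. k x y * indicator V x + k y x * indicator V y \<partial>lebesgue) \<partial>lebesgue)
      \<le> 2 * ennreal (2 * C * M / \<alpha>) * emeasure lebesgue V"
    using k_meas V by (intro lebesgue.nn_integral_symmetrized_le)
  also have "2 * ennreal (2 * C * M / \<alpha>) = ennreal M * ennreal (4 * C / \<alpha>)"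
    using riesz_ball_const_nonneg[of "DIM('a)"] \<alpha> piecewise_powr_nonneg[of \<alpha> \<beta> "diameter \<Omega>"]
    by (simp add: C_def M_def ennreal_mult[symmetric] ennreal_numeral[symmetric] field_simps
        del: ennreal_numeral)
  finally show ?thesis
    unfolding C_def M_def by (simp add: mult.assoc)
qed

lemma frac_modular_le_piecewise:
  fixes \<Omega> :: "'a::euclidean_space set" and p1 p2 s1 s2 :: "'a \<Rightarrow> 'a \<Rightarrow> real"
    and d1 d2 :: real and v :: "'a \<Rightarrow> real"
  assumes \<Omega>: "\<Omega> \<in> sets lebesgue" "bounded \<Omega>"
    and p1_pos: "\<forall>x\<in>\<Omega>. \<forall>y\<in>\<Omega>. 0 < p1 x y" and p1_le_p2: "\<forall>x\<in>\<Omega>. \<forall>y\<in>\<Omega>. p1 x y \<le> p2 x y"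
    and p1_inf: "0 < inf_on p1 \<Omega>" and p1_bdd: "bdd_above ((\<lambda>z. p1 (fst z) (snd z)) ` (\<Omega> \<times> \<Omega>))"
    and d: "0 < d1" "\<forall>x\<in>\<Omega>. \<forall>y\<in>\<Omega>. d1 \<le> s2 x y - s1 x y \<and> s2 x y - s1 x y \<le> d2"
    and v: "v \<in> borel_measurable (restrict_space lebesgue \<Omega>)"
  shows "frac_modular s1 p1 v \<Omega>
    \<le> ennreal (piecewise_powr (d1 * inf_on p1 \<Omega>) (d2 * sup_on p1 \<Omega>) (diameter \<Omega>))
      * (frac_modular s2 p2 v \<Omega>
         + ennreal (4 * riesz_ball_const DIM('a) / (d1 * inf_on p1 \<Omega>))
           * emeasure lebesgue (\<Omega> \<inter> {x. v x \<noteq> 0}))"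
proof (cases "\<Omega> = {}")
  case True
  then show ?thesis by (simp add: frac_modular_def)
next
  case False
  then obtain x0 where x0: "x0 \<in> \<Omega>" by auto
  define n where "n = real DIM('a)"
  define \<alpha> where "\<alpha> = d1 * inf_on p1 \<Omega>"
  define \<beta> where "\<beta> = d2 * sup_on p1 \<Omega>"
  define M where "M = piecewise_powr \<alpha> \<beta> (diameter \<Omega>)"
  define V where "V = \<Omega> \<inter> {x. v x \<noteq> 0}"
  define k where "k x y = ennreal (piecewise_powr (\<alpha> - n) (\<beta> - n) (dist x y)) * indicator \<Omega> y" for x y
  have \<alpha>: "0 < \<alpha>" unfolding \<alpha>_def using d p1_inf by simp
  have exponent: "\<alpha> \<le> (s2 x y - s1 x y) * p1 x y" "(s2 x y - s1 x y) * p1 x y \<le> \<beta>"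
    if "x \<in> \<Omega>" "y \<in> \<Omega>" for x y
    unfolding \<alpha>_def \<beta>_def using exponent_gap_bounds[OF p1_pos p1_bdd p1_inf _ d(2) that] d by auto
  have V: "V \<in> sets lebesgue" "V \<subseteq> \<Omega>"
    unfolding V_def using \<Omega>(1) v by (auto intro: sets_nonzero_restrict_space)
  have "frac_modular s1 p1 v \<Omega> \<le> ennreal M * frac_modular s2 p2 v \<Omega>
      + (\<integral>\<^sup>+x. (\<integral>\<^sup>+y. k x y * indicator V x + k y x * indicator V y \<partial>lebesgue) \<partial>lebesgue)"
    unfolding frac_modular_def n_def[symmetric]
  proof (intro lebesgue.nn_integral_double_le_pointwise)
    show "(\<lambda>(x, y). k x y * indicator V x + k y x * indicator V y) \<in> borel_measurable (lebesgue \<Otimes>\<^sub>M lebesgue)"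
      using \<Omega>(1) V(1) unfolding k_def by measurable
  next
    fix x y assume x: "x \<in> \<Omega>"
    show "ennreal (\<bar>v x - v y\<bar> powr p1 x y / dist x y powr (n + s1 x y * p1 x y)) * indicator \<Omega> y
      \<le> ennreal M * (ennreal (\<bar>v x - v y\<bar> powr p2 x y / dist x y powr (n + s2 x y * p2 x y)) * indicator \<Omega> y)
        + (k x y * indicator V x + k y x * indicator V y)"
    proof (cases "y \<in> \<Omega> \<and> y \<noteq> x")
      case True
      then have "0 < dist x y" "dist x y \<le> diameter \<Omega>"
        using x \<Omega>(2) by (auto intro: diameter_bounded_bound)
      then show ?thesis
        unfolding M_def using True x exponent[OF x] \<alpha> p1_pos p1_le_p2
        by (simp, intro ennreal_frac_integrand_le) (auto simp: k_def V_def indicator_def dist_commute)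
    qed (auto simp: indicator_def)
  qed auto
  also have "\<dots> \<le> ennreal M * frac_modular s2 p2 v \<Omega>
      + ennreal M * (ennreal (4 * riesz_ball_const DIM('a) / \<alpha>) * emeasure lebesgue V)"
    unfolding M_def k_def n_def using \<Omega> V \<alpha> exponent[OF x0 x0]
    by (intro add_left_mono nn_integral_symmetrized_kernel_le) auto
  finally show ?thesis
    unfolding M_def \<alpha>_def \<beta>_def V_def by (simp add: distrib_left)
qed

theorem lemma2p1:
  "\<exists>c::real. c > 0 \<and>
    (\<forall>(\<Omega>::'a::euclidean_space set) p1 p2 s1 s2 (d1::real) d2 (v::'a \<Rightarrow> real).
      \<Omega> \<in> sets lebesgue \<and> bounded \<Omega>
      \<and> (\<forall>f\<in>{p1, p2, s1, s2}.
            (\<lambda>z. f (fst z) (snd z)) \<in> borel_measurable (restrict_space (lebesgue \<Otimes>\<^sub>M lebesgue) (\<Omega> \<times> \<Omega>))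
          \<and> (\<forall>x\<in>\<Omega>. \<forall>y\<in>\<Omega>. f x y > 0 \<and> f x y = f y x))
      \<and> (\<forall>x\<in>\<Omega>. \<forall>y\<in>\<Omega>. s1 x y < s2 x y \<and> p1 x y \<le> p2 x y)
      \<and> 0 < inf_on p1 \<Omega> \<and> bdd_above ((\<lambda>z. p1 (fst z) (snd z)) ` (\<Omega> \<times> \<Omega>))
      \<and> 0 < d1 \<and> d1 \<le> d2
      \<and> (\<forall>x\<in>\<Omega>. \<forall>y\<in>\<Omega>. d1 \<le> s2 x y - s1 x y \<and> s2 x y - s1 x y \<le> d2)
      \<and> v \<in> borel_measurable (restrict_space lebesgue \<Omega>)
      \<longrightarrow> frac_modular s1 p1 v \<Omega>
          \<le> ennreal (if diameter \<Omega> \<le> 1 then diameter \<Omega> powr (d1 * inf_on p1 \<Omega>)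
                     else diameter \<Omega> powr (d2 * sup_on p1 \<Omega>))
            * (frac_modular s2 p2 v \<Omega>
               + ennreal (c / (d1 * inf_on p1 \<Omega>)) * emeasure lebesgue (\<Omega> \<inter> {x. v x \<noteq> 0})))"
proof (intro exI[of _ "4 * riesz_ball_const DIM('a)"] conjI allI impI)
  show "0 < 4 * riesz_ball_const DIM('a)"
    by (simp add: riesz_ball_const_def)
qed (elim conjE, rule frac_modular_le_piecewise[unfolded piecewise_powr_def]; blast)

end
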